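(* Let $\Delta x>0$, grid $x_j=x_1+(j-1)\Delta x$, $M_-,M_+\in\mathbb{Z}$ with $M:=M_-+M_+\ge0$, and let $f,h$ be real functions of class $C^{N_{TJ}+2}$ forming a reconstruction pair, $f(x)=\frac{1}{\Delta x}\int_{x-\frac12\Delta x}^{x+\frac12\Delta x}h(\zeta)\,d\zeta$, on an interval containing the relevant points. For each grid index $j$, let $p_{f,j}$ be the polynomial of degree $\le M$ interpolating $f$ at $x_{j-M_-},\dots,x_{j+M_+}$, let $p_{h,j}$ be the polynomial of degree $\le M$ with $p_{f,j}(x)=\frac1{\Delta x}\int_{x-\frac12\Delta x}^{x+\frac12\Delta x}p_{h,j}$ for all $x$, and let $\hat h_{j,j+\frac12}:=p_{h,j}(x_j+\tfrac12\Delta x)$. Then for $N_{TJ}\ge M+1$, $$\frac{\hat h_{i,i+\frac12}-\hat h_{i-1,i-\frac12}}{\Delta x}=f'(x_i)+\sum_{n=M+1}^{N_{TJ}}\Lambda_{M_-,M_+,n}\Delta x^n f^{(n+1)}(x_i)+O(\Delta x^{N_{TJ}+1})=f'(x_i)+O(\Delta x^{M+1}),$$ where $\Lambda_{M_-,M_+,n}=\sum_{\ell=0}^{n-M-1}\frac{(-1)^\ell}{(\ell+1)!}\mu_{h,M_-,M_+,n-\ell}(\tfrac12)$.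
   Context: $O(\cdot)$ refers to $\Delta x\to0^+$. $V_{M_-,M_+}$ is the Vandermonde matrix with entries $(i-1-M_-)^{j-1}$, $1\le i,j\le M+1$ (with $0^0=1$); $\nu_{M_-,M_+,m,k}:=\sum_{\ell=-M_-}^{M_+}(V_{M_-,M_+}^{-1})_{m+1,\ell+M_-+1}\ell^k$; $\tau_0=1$, $\tau_{2k}=\sum_{s=0}^{k-1}\frac{-\tau_{2s}}{2^{2k-2s}(2k-2s+1)!}$ for $k>0$; $\mu_{h,M_-,M_+,s}(\xi)=\sum_{k=0}^{\lfloor s/2\rfloor}\frac{-\tau_{2k}}{(s-2k)!}\xi^{s-2k}+\sum_{m=0}^{M}\Big(\sum_{k=0}^{\lfloor (M-m)/2\rfloor}\tau_{2k}\nu_{M_-,M_+,m+2k,s}\frac{(m+2k)!}{s!\,m!}\Big)\xi^m$. *)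

theory Defs
  imports "HOL-Analysis.Analysis" "HOL-Library.Landau_Symbols"
    "HOL-Computational_Algebra.Polynomial" "Jordan_Normal_Form.Matrix"
begin

definition Ck_on :: "nat \<Rightarrow> (real \<Rightarrow> real) \<Rightarrow> real set \<Rightarrow> bool" where
  "Ck_on k f U \<longleftrightarrow> (\<forall>m<k. \<forall>y\<in>U. ((deriv ^^ m) f) field_differentiable (at y))
                    \<and> continuous_on U ((deriv ^^ k) f)"

text \<open>Vandermonde matrix V_{M-,M+} (0-indexed): entry (i,j) is (i - M_-)^j, with 0^0 = 1.\<close>
definition vandermonde :: "int \<Rightarrow> int \<Rightarrow> real mat" where
  "vandermonde Mm Mp = mat (nat (Mm + Mp) + 1) (nat (Mm + Mp) + 1)
      (\<lambda>(i, j). (real_of_int (int i - Mm)) ^ j)"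

definition vandermonde_inv :: "int \<Rightarrow> int \<Rightarrow> real mat" where
  "vandermonde_inv Mm Mp = (THE B. B \<in> carrier_mat (nat (Mm + Mp) + 1) (nat (Mm + Mp) + 1)
      \<and> B * vandermonde Mm Mp = 1\<^sub>m (nat (Mm + Mp) + 1)
      \<and> vandermonde Mm Mp * B = 1\<^sub>m (nat (Mm + Mp) + 1))"

text \<open>nu_{M-,M+,m,k} = sum_{l=-M-}^{M+} (V^{-1})_{m+1, l+M-+1} l^k (here 0-indexed).\<close>
definition nu :: "int \<Rightarrow> int \<Rightarrow> nat \<Rightarrow> nat \<Rightarrow> real" where
  "nu Mm Mp m k = (\<Sum>l\<in>{-Mm..Mp}. vandermonde_inv Mm Mp $$ (m, nat (l + Mm)) * (real_of_int l) ^ k)"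

text \<open>tau k denotes tau_{2k}: tau_0 = 1, tau_{2k} = sum_{s<k} -tau_{2s}/(2^{2k-2s} (2k-2s+1)!).\<close>
fun tau :: "nat \<Rightarrow> real" where
  "tau 0 = 1"
| "tau (Suc k) = (\<Sum>s<Suc k. - tau s / (2 ^ (2 * Suc k - 2 * s) * fact (2 * Suc k - 2 * s + 1)))"

definition mu :: "int \<Rightarrow> int \<Rightarrow> nat \<Rightarrow> real \<Rightarrow> real" where
  "mu Mm Mp s \<xi> =
     (\<Sum>k\<le>s div 2. - tau k / fact (s - 2 * k) * \<xi> ^ (s - 2 * k))
   + (\<Sum>m\<le>nat (Mm + Mp).
        (\<Sum>k\<le>(nat (Mm + Mp) - m) div 2.
           tau k * nu Mm Mp (m + 2 * k) s * fact (m + 2 * k) / (fact s * fact m)) * \<xi> ^ m)"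

definition Lambda :: "int \<Rightarrow> int \<Rightarrow> nat \<Rightarrow> real" where
  "Lambda Mm Mp n = (\<Sum>l\<le>n - nat (Mm + Mp) - 1. (-1) ^ l / fact (l + 1) * mu Mm Mp (n - l) (1 / 2))"

definition pf :: "(real \<Rightarrow> real) \<Rightarrow> int \<Rightarrow> int \<Rightarrow> real \<Rightarrow> real \<Rightarrow> real poly" where
  "pf f Mm Mp dx c = (THE p. degree p \<le> nat (Mm + Mp) \<and>
      (\<forall>k\<in>{-Mm..Mp}. poly p (c + real_of_int k * dx) = f (c + real_of_int k * dx)))"

definition ph :: "int \<Rightarrow> int \<Rightarrow> real \<Rightarrow> real poly \<Rightarrow> real poly" where
  "ph Mm Mp dx p = (THE q. degree q \<le> nat (Mm + Mp) \<and>
      (\<forall>y. poly p y = 1 / dx * integral {y - dx / 2 .. y + dx / 2} (poly q)))"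

definition hhat :: "(real \<Rightarrow> real) \<Rightarrow> int \<Rightarrow> int \<Rightarrow> real \<Rightarrow> real \<Rightarrow> real" where
  "hhat f Mm Mp dx c = poly (ph Mm Mp dx (pf f Mm Mp dx c)) (c + dx / 2)"

end

theory Submission
  imports Defs "HOL-Computational_Algebra.Formal_Power_Series" "Jordan_Normal_Form.Determinant"
begin

text \<open>Both reconstruction steps are linear and commute with translations and dilations, so
  \<open>hhat\<close> at \<open>x\<^sub>j\<close> is a fixed combination \<open>\<Sum>\<^sub>i w\<^sub>i f(x\<^sub>j + (i - M\<^sub>-) \<Delta>x)\<close>.
  Undoing cell averages on polynomials is the operator \<open>\<tau>(\<Delta>x D)\<close>, where \<open>\<tau>(X) = (X/2) / sinh (X/2)\<close>
  inverts the symbol of the cell average; expanding the interpolant in the Lagrange basis then shows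
  that the moments \<open>\<Sum>\<^sub>i w\<^sub>i (i - M\<^sub>-)^s / s!\<close> equal \<open>\<mu>(1/2) + [X^s] \<tau>(X) exp (X/2)\<close>, and that
  \<open>\<mu>(1/2)\<close> vanishes for \<open>s \<le> M\<close>. Taylor expanding \<open>f\<close> about \<open>x\<^sub>i\<close> and taking the backward
  difference multiplies these moments by \<open>(1 - exp (-X)) / X\<close>; since
  \<open>\<tau>(X) exp (X/2) (1 - exp (-X)) / X = 1\<close>, what is left is \<open>f'(x\<^sub>i)\<close> plus the \<open>\<Lambda>\<close> terms. The Taylor
  remainder contributes \<open>O(\<Delta>x^(N+2))\<close> at each node, hence \<open>O(\<Delta>x^(N+1))\<close> after dividing by \<open>\<Delta>x\<close>.\<close>

section \<open>Interpolation on the stencil\<close>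

lemma poly_eq_if_eq_on_points:
  fixes p q :: "'a :: idom poly"
  assumes "degree p \<le> n" "degree q \<le> n" "inj_on g A" "card A = Suc n"
    and "\<forall>a\<in>A. poly p (g a) = poly q (g a)"
  shows "p = q"
proof (rule ccontr)
  assume "p \<noteq> q"
  hence ne: "p - q \<noteq> 0" by simp
  have "g ` A \<subseteq> {x. poly (p - q) x = 0}" using assms(5) by auto
  hence "card (g ` A) \<le> card {x. poly (p - q) x = 0}"
    using poly_roots_finite[OF ne] by (rule card_mono[rotated])
  also have "\<dots> \<le> degree (p - q)" by (rule card_poly_roots_bound[OF ne])
  also have "\<dots> \<le> n" using assms(1,2) degree_diff_le by blast
  finally show False using card_image[OF assms(3)] assms(4) by simp
qed

text \<open>Stencil nodes are indexed by \<open>i = 0..M\<close>; node \<open>i\<close> is the paper's offset \<open>\<ell> = i - M\<^sub>-\<close>.\<close>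

definition stencil_node :: "int \<Rightarrow> nat \<Rightarrow> real" where
  "stencil_node Mm i = real_of_int (int i - Mm)"

lemma poly_eq_if_eq_on_stencil:
  fixes p q :: "real poly"
  assumes "degree p \<le> n" "degree q \<le> n" "dx \<noteq> 0"
    and "\<forall>i\<le>n. poly p (c + stencil_node Mm i * dx) = poly q (c + stencil_node Mm i * dx)"
  shows "p = q"
proof (rule poly_eq_if_eq_on_points[OF assms(1,2)])
  show "inj_on (\<lambda>i. c + stencil_node Mm i * dx) {..n}"
    using assms(3) by (auto simp: inj_on_def stencil_node_def)
qed (use assms(4) in auto)

lemma vandermonde_carrier:
  "vandermonde Mm Mp \<in> carrier_mat (nat (Mm + Mp) + 1) (nat (Mm + Mp) + 1)"
  by (simp add: vandermonde_def)

lemma det_vandermonde_neq_0: "det (vandermonde Mm Mp) \<noteq> 0"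
proof
  let ?n = "nat (Mm + Mp)"
  assume "det (vandermonde Mm Mp) = 0"
  then obtain v where v: "v \<in> carrier_vec (?n + 1)" "v \<noteq> 0\<^sub>v (?n + 1)"
      "vandermonde Mm Mp *\<^sub>v v = 0\<^sub>v (?n + 1)"
    using det_0_iff_vec_prod_zero_field[OF vandermonde_carrier] by blast
  define p where "p = (\<Sum>j\<le>?n. monom (v $ j) j)"
  have deg: "degree p \<le> ?n"
    unfolding p_def by (rule degree_sum_le) (auto intro: order.trans[OF degree_monom_le])
  have "poly p (stencil_node Mm i) = (vandermonde Mm Mp *\<^sub>v v) $ i" if "i \<le> ?n" for i
    using that v(1) unfolding p_def
    by (simp add: poly_sum poly_monom mult_mat_vec_def scalar_prod_def vandermonde_def
        stencil_node_def atLeast0LessThan lessThan_Suc_atMost mult.commute)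
  hence "p = 0"
    using poly_eq_if_eq_on_stencil[OF deg, of 0 1 0 Mm] v(3) by simp
  moreover have "coeff p j = v $ j" if "j \<le> ?n" for j
    using that by (simp add: p_def coeff_sum coeff_monom)
  ultimately have "v $ j = 0" if "j \<le> ?n" for j
    using that by simp
  hence "v = 0\<^sub>v (?n + 1)" using v(1) by (intro eq_vecI) auto
  with v(2) show False by simp
qed

lemma vandermonde_inv_inverse:
  "vandermonde_inv Mm Mp \<in> carrier_mat (nat (Mm + Mp) + 1) (nat (Mm + Mp) + 1)"
  "vandermonde_inv Mm Mp * vandermonde Mm Mp = 1\<^sub>m (nat (Mm + Mp) + 1)"
  "vandermonde Mm Mp * vandermonde_inv Mm Mp = 1\<^sub>m (nat (Mm + Mp) + 1)"
proof -
  let ?n = "nat (Mm + Mp) + 1" and ?V = "vandermonde Mm Mp"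
  have "?V \<in> Units (ring_mat TYPE(real) ?n undefined)"
    by (rule det_non_zero_imp_unit[OF vandermonde_carrier det_vandermonde_neq_0])
  then obtain B where B: "B \<in> carrier_mat ?n ?n" "B * ?V = 1\<^sub>m ?n" "?V * B = 1\<^sub>m ?n"
    unfolding Units_def ring_mat_def by auto
  have "B' = B" if "B' \<in> carrier_mat ?n ?n" "B' * ?V = 1\<^sub>m ?n" "?V * B' = 1\<^sub>m ?n" for B'
  proof -
    have "B' = B' * (?V * B)" using B that by simp
    also have "\<dots> = (B' * ?V) * B" using assoc_mult_mat[OF that(1) vandermonde_carrier B(1)] by simp
    finally show ?thesis using that B by simp
  qed
  hence "vandermonde_inv Mm Mp = B"
    unfolding vandermonde_inv_def using B by (intro the_equality) blast+
  with B show "vandermonde_inv Mm Mp \<in> carrier_mat ?n ?n" "vandermonde_inv Mm Mp * ?V = 1\<^sub>m ?n"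
      "?V * vandermonde_inv Mm Mp = 1\<^sub>m ?n"
    by simp_all
qed

lemma vandermonde_mult_inv_entry:
  assumes "i \<le> nat (Mm + Mp)" "i' \<le> nat (Mm + Mp)"
  shows "(\<Sum>j\<le>nat (Mm + Mp). stencil_node Mm i ^ j * vandermonde_inv Mm Mp $$ (j, i'))
       = (if i = i' then 1 else 0)"
proof -
  have "(vandermonde Mm Mp * vandermonde_inv Mm Mp) $$ (i, i') = (if i = i' then 1 else 0)"
    using vandermonde_inv_inverse(3)[of Mm Mp] assms by simp
  thus ?thesis
    using assms vandermonde_inv_inverse(1)[of Mm Mp]
    by (simp add: scalar_prod_def vandermonde_def stencil_node_def atLeast0LessThan lessThan_Suc_atMost)
qed

lemma inv_mult_vandermonde_entry:
  assumes "m \<le> nat (Mm + Mp)" "j \<le> nat (Mm + Mp)"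
  shows "(\<Sum>i\<le>nat (Mm + Mp). vandermonde_inv Mm Mp $$ (m, i) * stencil_node Mm i ^ j)
       = (if m = j then 1 else 0)"
proof -
  have "(vandermonde_inv Mm Mp * vandermonde Mm Mp) $$ (m, j) = (if m = j then 1 else 0)"
    using vandermonde_inv_inverse(2)[of Mm Mp] assms by simp
  thus ?thesis
    using assms vandermonde_inv_inverse(1)[of Mm Mp]
    by (simp add: scalar_prod_def vandermonde_def stencil_node_def atLeast0LessThan lessThan_Suc_atMost)
qed

lemma nu_eq_sum_nodes:
  assumes "Mm + Mp \<ge> 0"
  shows "nu Mm Mp m k = (\<Sum>i\<le>nat (Mm + Mp). vandermonde_inv Mm Mp $$ (m, i) * stencil_node Mm i ^ k)"
  unfolding nu_def
  by (rule sum.reindex_bij_witness[of _ "\<lambda>i. int i - Mm" "\<lambda>l. nat (l + Mm)"])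
    (use assms in \<open>auto simp: stencil_node_def\<close>)

lemma nu_eq_delta:
  assumes "Mm + Mp \<ge> 0" "m \<le> nat (Mm + Mp)" "s \<le> nat (Mm + Mp)"
  shows "nu Mm Mp m s = (if m = s then 1 else 0)"
  unfolding nu_eq_sum_nodes[OF assms(1)] using inv_mult_vandermonde_entry[OF assms(2,3)] .

definition lagrange_basis :: "int \<Rightarrow> int \<Rightarrow> nat \<Rightarrow> real poly" where
  "lagrange_basis Mm Mp i =
     (\<Sum>m\<le>nat (Mm + Mp). Polynomial.smult (vandermonde_inv Mm Mp $$ (m, i)) (monom 1 m))"

lemma degree_lagrange_basis: "degree (lagrange_basis Mm Mp i) \<le> nat (Mm + Mp)"
  unfolding lagrange_basis_def
  by (rule degree_sum_le) (auto intro: order.trans[OF degree_smult_le] order.trans[OF degree_monom_le])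

lemma poly_lagrange_basis:
  assumes "i \<le> nat (Mm + Mp)" "i' \<le> nat (Mm + Mp)"
  shows "poly (lagrange_basis Mm Mp i) (stencil_node Mm i') = (if i' = i then 1 else 0)"
  using vandermonde_mult_inv_entry[OF assms(2,1)]
  by (simp add: lagrange_basis_def poly_sum poly_monom mult.commute)

definition rescale :: "real \<Rightarrow> real \<Rightarrow> real poly \<Rightarrow> real poly" where
  "rescale c dx p = pcompose p [:- c / dx, 1 / dx:]"

lemma poly_rescale: "poly (rescale c dx p) y = poly p ((y - c) / dx)"
  by (simp add: rescale_def poly_pcompose diff_divide_distrib)

lemma degree_rescale: "degree (rescale c dx p) \<le> degree p"
proof -
  have "degree (rescale c dx p) \<le> degree p * degree [:- c / dx, 1 / dx:]"
    unfolding rescale_def by (rule degree_pcompose_le)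
  also have "\<dots> \<le> degree p" by simp
  finally show ?thesis .
qed

lemma pf_eq_lagrange:
  assumes M: "Mm + Mp \<ge> 0" and dx: "dx \<noteq> 0"
  shows "pf f Mm Mp dx c = (\<Sum>i\<le>nat (Mm + Mp).
           Polynomial.smult (f (c + stencil_node Mm i * dx)) (rescale c dx (lagrange_basis Mm Mp i)))"
    (is "_ = ?P")
proof -
  let ?n = "nat (Mm + Mp)" and ?x = "\<lambda>i. c + stencil_node Mm i * dx"
  have deg: "degree ?P \<le> ?n"
    by (rule degree_sum_le)
      (auto intro: order.trans[OF degree_smult_le] order.trans[OF degree_rescale] degree_lagrange_basis)
  have nodes: "poly ?P (?x i') = f (?x i')" if "i' \<le> ?n" for i'
  proof -
    have "poly ?P (?x i') = (\<Sum>i\<le>?n. if i = i' then f (?x i') else 0)"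
      unfolding poly_sum poly_smult poly_rescale using dx that
      by (intro sum.cong) (auto simp: poly_lagrange_basis)
    thus ?thesis using that by simp
  qed
  have offset_node: "stencil_node Mm (nat (k + Mm)) = real_of_int k" "nat (k + Mm) \<le> ?n"
    if "k \<in> {-Mm..Mp}" for k
    using that by (auto simp: stencil_node_def)
  show ?thesis
    unfolding pf_def
  proof (rule the_equality)
    show "degree ?P \<le> ?n \<and> (\<forall>k\<in>{-Mm..Mp}. poly ?P (c + real_of_int k * dx) = f (c + real_of_int k * dx))"
      using deg nodes offset_node by (metis (no_types, lifting))
    fix p
    assume p: "degree p \<le> ?n \<and> (\<forall>k\<in>{-Mm..Mp}. poly p (c + real_of_int k * dx) = f (c + real_of_int k * dx))"
    have "poly p (?x i) = f (?x i)" if "i \<le> ?n" for i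
    proof -
      have "int i - Mm \<in> {-Mm..Mp}" using that M by auto
      from p[THEN conjunct2, rule_format, OF this] show ?thesis by (simp add: stencil_node_def)
    qed
    thus "p = ?P"
      using deg nodes p dx by (intro poly_eq_if_eq_on_stencil[of p ?n ?P dx c Mm]) auto
  qed
qed

section \<open>Power series in the derivative\<close>

lemma higher_pderiv_eq_0_if_degree_less:
  fixes p :: "'a :: {idom, semiring_char_0} poly"
  assumes "degree p < j"
  shows "(pderiv ^^ j) p = 0"
proof -
  obtain i where j: "j = Suc i" using assms by (cases j) auto
  have "degree ((pderiv ^^ i) p) = 0" using assms j by (simp add: degree_higher_pderiv)
  hence "pderiv ((pderiv ^^ i) p) = 0" by (simp add: pderiv_eq_0_iff)
  thus ?thesis using j by simp
qed

lemma smult_sum_right: "Polynomial.smult c (sum f A) = (\<Sum>i\<in>A. Polynomial.smult c (f i))"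
  by (induction A rule: infinite_finite_induct) (simp_all add: smult_add_right)

text \<open>\<open>fps_deriv_op n a d p\<close> is \<open>a(d D) p\<close> for the derivative \<open>D\<close>, with the series cut off
  after degree \<open>n\<close>; on polynomials of degree \<open>\<le> n\<close> the cut-off is exact, so the operators
  compose like the series multiply.\<close>

definition fps_deriv_op :: "nat \<Rightarrow> real fps \<Rightarrow> real \<Rightarrow> real poly \<Rightarrow> real poly" where
  "fps_deriv_op n a d p = (\<Sum>j\<le>n. Polynomial.smult (fps_nth a j * d ^ j) ((pderiv ^^ j) p))"

lemma degree_fps_deriv_op: "degree (fps_deriv_op n a d p) \<le> degree p"
  unfolding fps_deriv_op_def
  by (rule degree_sum_le) (auto intro: order.trans[OF degree_smult_le] simp: degree_higher_pderiv)

lemma fps_deriv_op_mult: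
  assumes "degree p \<le> n"
  shows "fps_deriv_op n a d (fps_deriv_op n b d p) = fps_deriv_op n (a * b) d p"
proof -
  let ?g = "\<lambda>i k. Polynomial.smult (fps_nth a i * fps_nth b k * d ^ (i + k)) ((pderiv ^^ (i + k)) p)"
  have pderiv_pderiv: "(pderiv ^^ i) ((pderiv ^^ k) p) = (pderiv ^^ (i + k)) p" for i k
    by (simp add: funpow_add)
  have vanish: "(pderiv ^^ j) p = 0" if "n < j" for j
    using assms that by (intro higher_pderiv_eq_0_if_degree_less) simp
  have "fps_deriv_op n a d (fps_deriv_op n b d p) = (\<Sum>(i, k)\<in>{..n} \<times> {..n}. ?g i k)"
    unfolding fps_deriv_op_def sum.cartesian_product[symmetric]
    by (simp add: higher_pderiv_sum higher_pderiv_smult smult_sum_right pderiv_pderiv power_add mult_ac)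
  also have "\<dots> = (\<Sum>(i, k)\<in>{(i, k). i + k \<le> n}. ?g i k)"
    by (rule sum.mono_neutral_right) (auto, use vanish not_le in blast)
  also have "\<dots> = (\<Sum>m\<le>n. \<Sum>i\<le>m. ?g i (m - i))"
    by (rule sum.triangle_reindex_eq)
  also have "\<dots> = fps_deriv_op n (a * b) d p"
    unfolding fps_deriv_op_def fps_mult_nth
    by (rule sum.cong) (auto simp: Polynomial.smult_sum atLeast0AtMost sum_distrib_right intro!: sum.cong)
  finally show ?thesis .
qed

lemma fps_deriv_op_one: "fps_deriv_op n 1 d p = p"
proof -
  have "fps_deriv_op n 1 d p = (\<Sum>j\<le>n. if j = 0 then p else 0)"
    unfolding fps_deriv_op_def by (rule sum.cong) (auto simp: fps_one_nth)
  thus ?thesis by simp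
qed

lemma fps_deriv_op_sum:
  "fps_deriv_op n a d (\<Sum>i\<in>A. Polynomial.smult (c i) (P i))
     = (\<Sum>i\<in>A. Polynomial.smult (c i) (fps_deriv_op n a d (P i)))"
  unfolding fps_deriv_op_def
  by (simp add: higher_pderiv_sum higher_pderiv_smult smult_sum_right sum.swap[of _ A] mult.commute)

lemma higher_pderiv_rescale:
  "(pderiv ^^ j) (rescale c dx p) = Polynomial.smult ((1 / dx) ^ j) (rescale c dx ((pderiv ^^ j) p))"
proof (induction j)
  case (Suc j)
  have "pderiv [:- c / dx, 1 / dx:] = [:1 / dx:]" by (simp add: pderiv_pCons)
  thus ?case using Suc
    by (simp add: pderiv_smult rescale_def pderiv_pcompose smult_smult mult.commute)
qed simp

lemma poly_fps_deriv_op_rescale: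
  assumes "dx \<noteq> 0"
  shows "poly (fps_deriv_op n a dx (rescale c dx p)) (c + dx / 2) = poly (fps_deriv_op n a 1 p) (1 / 2)"
  unfolding fps_deriv_op_def poly_sum
proof (rule sum.cong)
  fix j
  have "dx ^ j * (1 / dx) ^ j = 1" using assms by (simp add: power_one_over field_simps)
  moreover have "(c + dx / 2 - c) / dx = 1 / 2" using assms by simp
  ultimately show "poly (Polynomial.smult (fps_nth a j * dx ^ j) ((pderiv ^^ j) (rescale c dx p))) (c + dx / 2)
      = poly (Polynomial.smult (fps_nth a j * 1 ^ j) ((pderiv ^^ j) p)) (1 / 2)"
    using assms by (simp add: higher_pderiv_rescale poly_rescale mult.assoc)
qed simp

section \<open>The generating functions\<close>

text \<open>As series in \<open>X\<close>: \<open>avg_fps = (exp (X/2) - exp (-X/2)) / X\<close> is the symbol of the cell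
  average, its inverse \<open>tau_fps\<close> carries the coefficients \<open>\<tau>\<^sub>2\<^sub>k\<close> of the paper, and
  \<open>bdiff_fps = (1 - exp (-X)) / X\<close> is the symbol of the backward difference quotient.\<close>

definition avg_fps :: "real fps" where
  "avg_fps = Abs_fps (\<lambda>j. if even j then 1 / (2 ^ j * fact (j + 1)) else 0)"

definition tau_fps :: "real fps" where
  "tau_fps = Abs_fps (\<lambda>j. if even j then tau (j div 2) else 0)"

definition bdiff_fps :: "real fps" where
  "bdiff_fps = Abs_fps (\<lambda>l. (-1) ^ l / fact (l + 1))"

lemma sum_atLeast0_even:
  fixes g :: "nat \<Rightarrow> 'a :: comm_monoid_add"
  assumes "\<And>i. odd i \<Longrightarrow> g i = 0"
  shows "(\<Sum>i=0..s. g i) = (\<Sum>k\<le>s div 2. g (2 * k))"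
proof -
  have "(\<Sum>i=0..s. g i) = (\<Sum>i\<in>{i\<in>{0..s}. even i}. g i)"
    by (rule sum.mono_neutral_right) (auto simp: assms)
  also have "{i\<in>{0..s}. even i} = (\<lambda>k. 2 * k) ` {..s div 2}"
  proof
    show "{i \<in> {0..s}. even i} \<subseteq> (*) 2 ` {..s div 2}"
    proof
      fix i assume "i \<in> {i \<in> {0..s}. even i}"
      then obtain k where "i = 2 * k" "2 * k \<le> s" by auto
      thus "i \<in> (*) 2 ` {..s div 2}" by auto
    qed
  qed auto
  also have "(\<Sum>i\<in>(\<lambda>k. 2 * k) ` {..s div 2}. g i) = (\<Sum>k\<le>s div 2. g (2 * k))"
    by (subst sum.reindex) (auto simp: inj_on_def)
  finally show ?thesis .
qed

lemma tau_fps_avg_fps: "tau_fps * avg_fps = 1"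
proof (rule fps_ext)
  fix n
  show "fps_nth (tau_fps * avg_fps) n = fps_nth 1 n"
  proof (cases "odd n")
    case True
    have "fps_nth (tau_fps * avg_fps) n = (\<Sum>i = 0..n. 0)"
      unfolding fps_mult_nth by (rule sum.cong) (use True in \<open>auto simp: tau_fps_def avg_fps_def\<close>)
    thus ?thesis using True by (cases n) (auto simp: fps_one_nth)
  next
    case False
    then obtain K where n: "n = 2 * K" by auto
    have "fps_nth (tau_fps * avg_fps) n = (\<Sum>k\<le>K. fps_nth tau_fps (2 * k) * fps_nth avg_fps (n - 2 * k))"
      unfolding fps_mult_nth by (subst sum_atLeast0_even) (auto simp: tau_fps_def n)
    also have "\<dots> = (\<Sum>k\<le>K. tau k / (2 ^ (2 * K - 2 * k) * fact (2 * K - 2 * k + 1)))"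
      by (rule sum.cong) (auto simp: tau_fps_def avg_fps_def n)
    also have "\<dots> = fps_nth 1 n"
    proof (cases K)
      case 0 thus ?thesis by (simp add: n)
    next
      case (Suc k)
      have "(\<Sum>s\<le>K. tau s / (2 ^ (2 * K - 2 * s) * fact (2 * K - 2 * s + 1)))
          = tau K + (\<Sum>s<K. tau s / (2 ^ (2 * K - 2 * s) * fact (2 * K - 2 * s + 1)))"
        by (simp add: lessThan_Suc_atMost[symmetric] Suc)
      also have "(\<Sum>s<K. tau s / (2 ^ (2 * K - 2 * s) * fact (2 * K - 2 * s + 1))) = - tau K"
        unfolding Suc by (simp only: tau.simps minus_divide_left[symmetric] sum_negf minus_minus)
      finally show ?thesis using Suc n by simp
    qed
    finally show ?thesis .
  qed
qed

lemma fps_mult_X_cancel: "f * fps_X = g * fps_X \<Longrightarrow> (f :: real fps) = g"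
proof (rule fps_ext)
  fix n assume "f * fps_X = g * fps_X"
  hence "fps_nth (f * fps_X) (Suc n) = fps_nth (g * fps_X) (Suc n)" by simp
  thus "fps_nth f n = fps_nth g n" by (simp add: fps_X_mult_right_nth)
qed

lemma avg_fps_X: "avg_fps * fps_X = fps_exp (1 / 2) - fps_exp (-1 / 2)"
proof (rule fps_ext)
  fix n show "fps_nth (avg_fps * fps_X) n = fps_nth (fps_exp (1 / 2) - fps_exp (-1 / 2)) n"
  proof (cases n)
    case (Suc m)
    show ?thesis
    proof (cases "even m")
      case True
      have "fps_nth (fps_exp (1 / 2) - fps_exp (-1 / 2)) n
          = ((1 / 2) ^ Suc m - (- 1 / 2) ^ Suc m) / (fact (Suc m) :: real)"
        using Suc by (simp only: fps_sub_nth fps_exp_nth of_nat_fact diff_divide_distrib)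
      also have "\<dots> = 1 / (2 ^ m * fact (m + 1))"
        using True by (simp add: power_minus_odd power_divide)
      finally show ?thesis using Suc True by (simp add: fps_X_mult_right_nth avg_fps_def)
    next
      case False
      thus ?thesis using Suc by (simp add: fps_X_mult_right_nth avg_fps_def power_minus_even power_divide)
    qed
  qed (simp add: fps_X_mult_right_nth)
qed

lemma bdiff_fps_X: "bdiff_fps * fps_X = 1 - fps_exp (-1)"
proof (rule fps_ext)
  fix n show "fps_nth (bdiff_fps * fps_X) n = fps_nth (1 - fps_exp (-1)) n"
    by (cases n) (simp_all add: fps_X_mult_right_nth bdiff_fps_def fps_one_nth algebra_simps)
qed

lemma tau_exp_half_bdiff_fps: "tau_fps * fps_exp (1 / 2) * bdiff_fps = 1"
proof (rule fps_mult_X_cancel)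
  have e: "fps_exp (1 / 2) * fps_exp (-1) = fps_exp (-1 / 2 :: real)"
    using fps_exp_add_mult[of "1 / 2" "-1::real"] by simp
  have "tau_fps * fps_exp (1 / 2) * bdiff_fps * fps_X = tau_fps * fps_exp (1 / 2) * (bdiff_fps * fps_X)"
    by (simp add: mult.assoc)
  also have "\<dots> = tau_fps * fps_exp (1 / 2) * (1 - fps_exp (-1))" by (simp add: bdiff_fps_X)
  also have "\<dots> = tau_fps * (fps_exp (1 / 2) - fps_exp (1 / 2) * fps_exp (-1))"
    by (simp add: algebra_simps)
  also have "\<dots> = tau_fps * (avg_fps * fps_X)" by (simp add: e avg_fps_X)
  also have "\<dots> = 1 * fps_X" by (simp add: mult.assoc[symmetric] tau_fps_avg_fps)
  finally show "tau_fps * fps_exp (1 / 2) * bdiff_fps * fps_X = 1 * fps_X" .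
qed

section \<open>Cell averages of polynomials\<close>

lemma poly_taylor_expansion:
  fixes q :: "real poly"
  assumes "degree q \<le> n"
  shows "poly q s = (\<Sum>j\<le>n. poly ((pderiv ^^ j) q) y / fact j * (s - y) ^ j)"
proof (cases "s = y")
  case True
  have "(\<Sum>j\<le>n. poly ((pderiv ^^ j) q) y / fact j * (s - y) ^ j)
      = (\<Sum>j\<in>{0}. poly ((pderiv ^^ j) q) y / fact j * (s - y) ^ j)"
    by (rule sum.mono_neutral_right) (auto simp: True)
  thus ?thesis by (simp add: True)
next
  case False
  obtain t where "poly q s = (\<Sum>m<Suc n. poly ((pderiv ^^ m) q) y / fact m * (s - y) ^ m)
      + poly ((pderiv ^^ Suc n) q) t / fact (Suc n) * (s - y) ^ Suc n"
    using Taylor[of "Suc n" "\<lambda>m. poly ((pderiv ^^ m) q)" "poly q" "min s y - 1" "max s y + 1" y s] False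
    by (force simp: poly_DERIV)
  moreover have "(pderiv ^^ Suc n) q = 0"
    using assms by (simp add: higher_pderiv_eq_0_if_degree_less del: funpow.simps)
  ultimately show ?thesis by (simp add: lessThan_Suc_atMost del: funpow.simps)
qed

lemma has_integral_centered_monomials:
  fixes c :: "nat \<Rightarrow> real"
  assumes "d > 0"
  shows "((\<lambda>s. \<Sum>j\<le>n. c j * (s - y) ^ j) has_integral
           (\<Sum>j\<le>n. c j * ((d / 2) ^ Suc j - (- (d / 2)) ^ Suc j) / Suc j)) {y - d / 2 .. y + d / 2}"
proof -
  let ?F = "\<lambda>s. \<Sum>j\<le>n. c j * (s - y) ^ Suc j / Suc j"
  have "((\<lambda>s. \<Sum>j\<le>n. c j * (s - y) ^ j) has_integral (?F (y + d / 2) - ?F (y - d / 2)))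
      {y - d / 2 .. y + d / 2}"
  proof (rule fundamental_theorem_of_calculus)
    fix s
    have "(?F has_real_derivative (\<Sum>j\<le>n. c j * (s - y) ^ j)) (at s within {y - d / 2 .. y + d / 2})"
      by (rule derivative_eq_intros refl | simp)+ (simp add: mult.commute)
    thus "(?F has_vector_derivative (\<Sum>j\<le>n. c j * (s - y) ^ j)) (at s within {y - d / 2 .. y + d / 2})"
      by (simp add: has_real_derivative_iff_has_vector_derivative)
  qed (use assms in simp)
  moreover have "?F (y + d / 2) - ?F (y - d / 2)
      = (\<Sum>j\<le>n. c j * ((d / 2) ^ Suc j - (- (d / 2)) ^ Suc j) / Suc j)"
  proof -
    have "y + d / 2 - y = d / 2" "y - d / 2 - y = - (d / 2)" by simp_all
    thus ?thesis unfolding sum_subtractf[symmetric]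
      by (intro sum.cong) (simp_all only: diff_divide_distrib right_diff_distrib)
  qed
  ultimately show ?thesis by simp
qed

lemma integral_cell_poly:
  fixes q :: "real poly"
  assumes "d > 0" "degree q \<le> n"
  shows "integral {y - d / 2 .. y + d / 2} (poly q) = d * poly (fps_deriv_op n avg_fps d q) y"
proof -
  let ?c = "\<lambda>j. poly ((pderiv ^^ j) q) y / fact j"
  have "poly q = (\<lambda>s. \<Sum>j\<le>n. ?c j * (s - y) ^ j)"
    using poly_taylor_expansion[OF assms(2)] by auto
  hence "integral {y - d / 2 .. y + d / 2} (poly q)
      = (\<Sum>j\<le>n. ?c j * ((d / 2) ^ Suc j - (- (d / 2)) ^ Suc j) / Suc j)"
    using has_integral_centered_monomials[OF assms(1), where c = ?c and n = n and y = y] by (simp add: integral_unique)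
  also have "\<dots> = d * poly (fps_deriv_op n avg_fps d q) y"
    unfolding fps_deriv_op_def poly_sum sum_distrib_left
  proof (rule sum.cong)
    fix j
    show "?c j * ((d / 2) ^ Suc j - (- (d / 2)) ^ Suc j) / Suc j
        = d * poly (Polynomial.smult (fps_nth avg_fps j * d ^ j) ((pderiv ^^ j) q)) y"
    proof (cases "even j")
      case True
      hence "(- (d / 2)) ^ Suc j = - ((d / 2) ^ Suc j)" by (simp add: power_minus_odd)
      thus ?thesis using True by (simp add: avg_fps_def field_simps power_divide)
    next
      case False
      hence "(- (d / 2)) ^ Suc j = (d / 2) ^ Suc j" by (simp add: power_minus_even)
      thus ?thesis using False by (simp add: avg_fps_def)
    qed
  qed simp
  finally show ?thesis .
qed

lemma ph_eq_fps_deriv_op: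
  assumes dx: "dx > 0" and deg: "degree p \<le> nat (Mm + Mp)"
  shows "ph Mm Mp dx p = fps_deriv_op (nat (Mm + Mp)) tau_fps dx p"
proof -
  let ?n = "nat (Mm + Mp)" and ?avg = "\<lambda>q y. 1 / dx * integral {y - dx / 2 .. y + dx / 2} (poly q)"
  have avg: "?avg q y = poly (fps_deriv_op ?n avg_fps dx q) y" if "degree q \<le> ?n" for q y
    using integral_cell_poly[OF dx that] dx by simp
  have deg_tau: "degree (fps_deriv_op ?n tau_fps dx p) \<le> ?n"
    using order.trans[OF degree_fps_deriv_op deg] .
  show ?thesis
    unfolding ph_def
  proof (rule the_equality)
    show "degree (fps_deriv_op ?n tau_fps dx p) \<le> ?n \<and> (\<forall>y. poly p y = ?avg (fps_deriv_op ?n tau_fps dx p) y)"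
      using deg_tau avg[OF deg_tau]
      by (simp add: fps_deriv_op_mult[OF deg] mult.commute[of avg_fps] tau_fps_avg_fps fps_deriv_op_one)
    fix q
    assume q: "degree q \<le> ?n \<and> (\<forall>y. poly p y = ?avg q y)"
    hence "p = fps_deriv_op ?n avg_fps dx q"
      using avg[of q] by (simp add: poly_eq_poly_eq_iff[symmetric] fun_eq_iff)
    thus "q = fps_deriv_op ?n tau_fps dx p"
      using q by (simp add: fps_deriv_op_mult tau_fps_avg_fps fps_deriv_op_one)
  qed
qed

section \<open>The reconstructed interface value as a weighted sum\<close>

definition hhat_weight :: "int \<Rightarrow> int \<Rightarrow> nat \<Rightarrow> real" where
  "hhat_weight Mm Mp i = poly (fps_deriv_op (nat (Mm + Mp)) tau_fps 1 (lagrange_basis Mm Mp i)) (1 / 2)"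

lemma hhat_eq_weighted_sum:
  assumes M: "Mm + Mp \<ge> 0" and dx: "dx > 0"
  shows "hhat f Mm Mp dx c = (\<Sum>i\<le>nat (Mm + Mp). hhat_weight Mm Mp i * f (c + stencil_node Mm i * dx))"
proof -
  let ?n = "nat (Mm + Mp)"
  have dx': "dx \<noteq> 0" using dx by simp
  have deg: "degree (pf f Mm Mp dx c) \<le> ?n"
    unfolding pf_eq_lagrange[OF M dx'] by (intro degree_sum_le)
      (auto intro: order.trans[OF degree_smult_le] order.trans[OF degree_rescale] degree_lagrange_basis)
  have "hhat f Mm Mp dx c = poly (fps_deriv_op ?n tau_fps dx (pf f Mm Mp dx c)) (c + dx / 2)"
    unfolding hhat_def ph_eq_fps_deriv_op[OF dx deg] ..
  also have "\<dots> = (\<Sum>i\<le>?n. f (c + stencil_node Mm i * dx)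
      * poly (fps_deriv_op ?n tau_fps dx (rescale c dx (lagrange_basis Mm Mp i))) (c + dx / 2))"
    by (simp add: pf_eq_lagrange[OF M dx'] fps_deriv_op_sum poly_sum)
  also have "\<dots> = (\<Sum>i\<le>?n. hhat_weight Mm Mp i * f (c + stencil_node Mm i * dx))"
    using dx' by (simp add: poly_fps_deriv_op_rescale hhat_weight_def mult.commute)
  finally show ?thesis .
qed

definition hhat_moment :: "int \<Rightarrow> int \<Rightarrow> nat \<Rightarrow> real" where
  "hhat_moment Mm Mp s = (\<Sum>i\<le>nat (Mm + Mp). hhat_weight Mm Mp i * stencil_node Mm i ^ s)"

definition falling_fact :: "nat \<Rightarrow> nat \<Rightarrow> real" where
  "falling_fact m j = (\<Prod>i<j. real (m - i))"

lemma falling_fact_eq_0: "m < j \<Longrightarrow> falling_fact m j = 0"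
  unfolding falling_fact_def by (rule prod_zero) (auto intro: bexI[of _ m])

lemma falling_fact_mult_fact: "j \<le> m \<Longrightarrow> falling_fact m j * fact (m - j) = fact m"
proof (induction j)
  case (Suc j)
  have "fact (m - j) = real (m - j) * fact (m - Suc j)"
    using Suc.prems by (metis Suc_diff_Suc fact_Suc of_nat_fact Suc_le_lessD)
  hence "falling_fact m (Suc j) * fact (m - Suc j) = falling_fact m j * fact (m - j)"
    by (simp add: falling_fact_def)
  thus ?case using Suc by simp
qed (simp add: falling_fact_def)

lemma falling_fact_eq: "j \<le> m \<Longrightarrow> falling_fact m j = fact m / fact (m - j)"
  using falling_fact_mult_fact[of j m] by (simp add: field_simps)

lemma higher_pderiv_monom_falling_fact:
  "(pderiv ^^ j) (monom c m) = monom (c * falling_fact m j) (m - j)"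
  by (induction j) (simp_all add: falling_fact_def pderiv_monom mult_ac)

lemma hhat_moment_eq_nu:
  assumes M: "Mm + Mp \<ge> 0"
  shows "hhat_moment Mm Mp s = (\<Sum>m\<le>nat (Mm + Mp). nu Mm Mp m s
           * (\<Sum>j\<le>nat (Mm + Mp). fps_nth tau_fps j * falling_fact m j * (1 / 2) ^ (m - j)))"
proof -
  let ?n = "nat (Mm + Mp)"
  have "(\<Sum>i\<le>?n. Polynomial.smult (stencil_node Mm i ^ s) (lagrange_basis Mm Mp i))
      = (\<Sum>m\<le>?n. Polynomial.smult (nu Mm Mp m s) (monom 1 m))"
    unfolding lagrange_basis_def nu_eq_sum_nodes[OF M] smult_sum_right smult_smult
    by (subst sum.swap) (simp add: smult_sum mult.commute)
  moreover have "hhat_moment Mm Mp s = poly (fps_deriv_op ?n tau_fps 1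
      (\<Sum>i\<le>?n. Polynomial.smult (stencil_node Mm i ^ s) (lagrange_basis Mm Mp i))) (1 / 2)"
    by (simp add: hhat_moment_def hhat_weight_def fps_deriv_op_sum poly_sum mult.commute)
  ultimately have "hhat_moment Mm Mp s
      = poly (fps_deriv_op ?n tau_fps 1 (\<Sum>m\<le>?n. Polynomial.smult (nu Mm Mp m s) (monom 1 m))) (1 / 2)"
    by simp
  thus ?thesis
    unfolding fps_deriv_op_sum poly_sum poly_smult
    by (simp add: fps_deriv_op_def poly_sum higher_pderiv_monom_falling_fact poly_monom mult_ac)
qed

lemma fps_nth_tau_exp_half:
  "fps_nth (tau_fps * fps_exp (1 / 2)) s = (\<Sum>k\<le>s div 2. tau k / fact (s - 2 * k) * (1 / 2) ^ (s - 2 * k))"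
proof -
  have "fps_nth (tau_fps * fps_exp (1 / 2)) s
      = (\<Sum>i = 0..s. fps_nth tau_fps i * ((1 / 2) ^ (s - i) / fact (s - i)))"
    unfolding fps_mult_nth by simp
  also have "\<dots> = (\<Sum>k\<le>s div 2. fps_nth tau_fps (2 * k) * ((1 / 2) ^ (s - 2 * k) / fact (s - 2 * k)))"
    by (rule sum_atLeast0_even) (simp add: tau_fps_def)
  also have "\<dots> = (\<Sum>k\<le>s div 2. tau k / fact (s - 2 * k) * (1 / 2) ^ (s - 2 * k))"
    by (rule sum.cong) (simp_all add: tau_fps_def)
  finally show ?thesis .
qed

lemma sum_tau_fps_falling_fact:
  assumes "m \<le> n"
  shows "(\<Sum>j\<le>n. fps_nth tau_fps j * falling_fact m j * (1 / 2) ^ (m - j))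
       = (\<Sum>k\<le>m div 2. tau k * falling_fact m (2 * k) * (1 / 2) ^ (m - 2 * k))"
proof -
  have "(\<Sum>j\<le>n. fps_nth tau_fps j * falling_fact m j * (1 / 2) ^ (m - j))
      = (\<Sum>j = 0..m. fps_nth tau_fps j * falling_fact m j * (1 / 2) ^ (m - j))"
    by (rule sum.mono_neutral_right) (use assms in \<open>auto simp: falling_fact_eq_0\<close>)
  also have "\<dots> = (\<Sum>k\<le>m div 2. fps_nth tau_fps (2 * k) * falling_fact m (2 * k) * (1 / 2) ^ (m - 2 * k))"
    by (rule sum_atLeast0_even) (simp add: tau_fps_def)
  also have "\<dots> = (\<Sum>k\<le>m div 2. tau k * falling_fact m (2 * k) * (1 / 2) ^ (m - 2 * k))"
    by (simp add: tau_fps_def)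
  finally show ?thesis .
qed

lemma sum_div2_reindex:
  fixes F :: "nat \<Rightarrow> nat \<Rightarrow> 'a :: comm_monoid_add"
  shows "(\<Sum>m\<le>n. \<Sum>k\<le>m div 2. F m k) = (\<Sum>m\<le>n. \<Sum>k\<le>(n - m) div 2. F (m + 2 * k) k)"
proof -
  have "(\<Sum>m\<le>n. \<Sum>k\<le>m div 2. F m k) = (\<Sum>(m, k)\<in>(SIGMA m:{..n}. {..m div 2}). F m k)"
    by (simp add: sum.Sigma)
  also have "\<dots> = (\<Sum>(m, k)\<in>(SIGMA m:{..n}. {..(n - m) div 2}). F (m + 2 * k) k)"
    by (rule sum.reindex_bij_witness[where i="\<lambda>(m, k). (m + 2 * k, k)" and j="\<lambda>(m, k). (m - 2 * k, k)"])
      auto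
  also have "\<dots> = (\<Sum>m\<le>n. \<Sum>k\<le>(n - m) div 2. F (m + 2 * k) k)"
    by (simp add: sum.Sigma)
  finally show ?thesis .
qed

lemma hhat_moment_eq_mu:
  assumes M: "Mm + Mp \<ge> 0"
  shows "hhat_moment Mm Mp s / fact s = mu Mm Mp s (1 / 2) + fps_nth (tau_fps * fps_exp (1 / 2)) s"
proof -
  let ?n = "nat (Mm + Mp)"
  let ?c = "\<lambda>m. \<Sum>k\<le>(?n - m) div 2. tau k * nu Mm Mp (m + 2 * k) s * fact (m + 2 * k) / (fact s * fact m)"
  have "hhat_moment Mm Mp s
      = (\<Sum>m\<le>?n. nu Mm Mp m s * (\<Sum>k\<le>m div 2. tau k * falling_fact m (2 * k) * (1 / 2) ^ (m - 2 * k)))"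
    unfolding hhat_moment_eq_nu[OF M] by (rule sum.cong) (simp_all add: sum_tau_fps_falling_fact)
  also have "\<dots> = (\<Sum>m\<le>?n. \<Sum>k\<le>m div 2. nu Mm Mp m s * tau k * falling_fact m (2 * k) * (1 / 2) ^ (m - 2 * k))"
    by (simp add: sum_distrib_left mult_ac)
  also have "\<dots> = (\<Sum>m\<le>?n. \<Sum>k\<le>(?n - m) div 2.
      nu Mm Mp (m + 2 * k) s * tau k * falling_fact (m + 2 * k) (2 * k) * (1 / 2) ^ (m + 2 * k - 2 * k))"
    by (rule sum_div2_reindex)
  also have "\<dots> = fact s * (\<Sum>m\<le>?n. ?c m * (1 / 2) ^ m)"
    by (simp add: sum_distrib_left sum_distrib_right falling_fact_eq mult_ac)
  finally have "hhat_moment Mm Mp s / fact s = (\<Sum>m\<le>?n. ?c m * (1 / 2) ^ m)"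
    by simp
  moreover have "(\<Sum>k\<le>s div 2. - tau k / fact (s - 2 * k) * (1 / 2) ^ (s - 2 * k))
      = - fps_nth (tau_fps * fps_exp (1 / 2)) s"
    unfolding fps_nth_tau_exp_half by (simp add: sum_negf[symmetric])
  ultimately show ?thesis
    unfolding mu_def by simp
qed

lemma hhat_moment_exact:
  assumes M: "Mm + Mp \<ge> 0" and s: "s \<le> nat (Mm + Mp)"
  shows "hhat_moment Mm Mp s = fact s * fps_nth (tau_fps * fps_exp (1 / 2)) s"
proof -
  let ?n = "nat (Mm + Mp)"
  have "hhat_moment Mm Mp s = (\<Sum>j\<le>?n. fps_nth tau_fps j * falling_fact s j * (1 / 2) ^ (s - j))"
    unfolding hhat_moment_eq_nu[OF M] using s
    by (simp add: nu_eq_delta[OF M _ s] if_distrib[of "\<lambda>x. x * _"] cong: if_cong)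
  also have "\<dots> = (\<Sum>j=0..s. fps_nth tau_fps j * falling_fact s j * (1 / 2) ^ (s - j))"
    by (rule sum.mono_neutral_right) (use s in \<open>auto simp: falling_fact_eq_0\<close>)
  also have "\<dots> = fact s * fps_nth (tau_fps * fps_exp (1 / 2)) s"
    by (simp add: fps_mult_nth sum_distrib_left falling_fact_eq mult_ac)
  finally show ?thesis .
qed

lemma mu_half_eq_0:
  assumes "Mm + Mp \<ge> 0" "s \<le> nat (Mm + Mp)"
  shows "mu Mm Mp s (1 / 2) = 0"
  using hhat_moment_eq_mu[OF assms(1), of s] hhat_moment_exact[OF assms] by simp

lemma power_Suc_diff_power_Suc_pred:
  fixes x :: "'a :: comm_ring_1"
  shows "x ^ Suc n - (x - 1) ^ Suc n = (\<Sum>s\<le>n. of_nat (Suc n choose s) * (-1) ^ (n - s) * x ^ s)"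
proof -
  have "(x - 1) ^ Suc n = (\<Sum>s\<le>Suc n. of_nat (Suc n choose s) * x ^ s * (-1) ^ (Suc n - s))"
    using binomial_ring[of x "-1" "Suc n"] by simp
  also have "\<dots> = (\<Sum>s\<le>n. of_nat (Suc n choose s) * x ^ s * (-1) ^ (Suc n - s)) + x ^ Suc n"
    by (simp add: sum.atMost_Suc)
  also have "(\<Sum>s\<le>n. of_nat (Suc n choose s) * x ^ s * (-1) ^ (Suc n - s))
       = - (\<Sum>s\<le>n. of_nat (Suc n choose s) * (-1) ^ (n - s) * x ^ s)"
    by (simp add: sum_negf[symmetric] Suc_diff_le mult_ac)
  finally show ?thesis by simp
qed

lemma hhat_weight_bdiff_eq_moments:
  "(\<Sum>i\<le>nat (Mm + Mp). hhat_weight Mm Mp i * (stencil_node Mm i ^ Suc n - (stencil_node Mm i - 1) ^ Suc n))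
     / fact (Suc n)
   = (\<Sum>s\<le>n. fps_nth bdiff_fps (n - s) * (hhat_moment Mm Mp s / fact s))"
proof -
  have "(\<Sum>i\<le>nat (Mm + Mp). hhat_weight Mm Mp i * (stencil_node Mm i ^ Suc n - (stencil_node Mm i - 1) ^ Suc n))
      / fact (Suc n)
    = (\<Sum>s\<le>n. of_nat (Suc n choose s) * (-1) ^ (n - s) / fact (Suc n) * hhat_moment Mm Mp s)"
    unfolding power_Suc_diff_power_Suc_pred hhat_moment_def
    by (simp add: sum_distrib_left sum_distrib_right sum_divide_distrib mult_ac sum.swap[of _ "{..nat (Mm + Mp)}"])
  also have "\<dots> = (\<Sum>s\<le>n. fps_nth bdiff_fps (n - s) * (hhat_moment Mm Mp s / fact s))"
  proof (rule sum.cong)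
    fix s assume "s \<in> {..n}"
    hence "of_nat (Suc n choose s) = fact (Suc n) / (fact s * fact (n - s + 1) :: real)"
      by (simp add: binomial_fact Suc_diff_le)
    thus "of_nat (Suc n choose s) * (-1) ^ (n - s) / fact (Suc n) * hhat_moment Mm Mp s
        = fps_nth bdiff_fps (n - s) * (hhat_moment Mm Mp s / fact s)"
      by (simp add: bdiff_fps_def)
  qed simp
  finally show ?thesis .
qed

lemma sum_bdiff_fps_mu_half:
  assumes M: "Mm + Mp \<ge> 0"
  shows "(\<Sum>s\<le>n. fps_nth bdiff_fps (n - s) * mu Mm Mp s (1 / 2))
       = (if nat (Mm + Mp) + 1 \<le> n then Lambda Mm Mp n else 0)"
proof -
  let ?M = "nat (Mm + Mp)"
  have "(\<Sum>s\<le>n. fps_nth bdiff_fps (n - s) * mu Mm Mp s (1 / 2))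
      = (\<Sum>s\<in>{?M + 1..n}. fps_nth bdiff_fps (n - s) * mu Mm Mp s (1 / 2))"
    by (rule sum.mono_neutral_right) (auto simp: mu_half_eq_0[OF M])
  also have "\<dots> = (if ?M + 1 \<le> n then Lambda Mm Mp n else 0)"
  proof (cases "?M + 1 \<le> n")
    case True
    have "Lambda Mm Mp n = (\<Sum>l\<le>n - ?M - 1. fps_nth bdiff_fps l * mu Mm Mp (n - l) (1 / 2))"
      unfolding Lambda_def bdiff_fps_def by simp
    also have "\<dots> = (\<Sum>s\<in>{?M + 1..n}. fps_nth bdiff_fps (n - s) * mu Mm Mp s (1 / 2))"
      by (rule sum.reindex_bij_witness[where i="\<lambda>s. n - s" and j="\<lambda>l. n - l"]) (use True in auto)
    finally show ?thesis using True by simp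
  qed simp
  finally show ?thesis .
qed

lemma hhat_weight_bdiff:
  assumes "Mm + Mp \<ge> 0"
  shows "(\<Sum>i\<le>nat (Mm + Mp). hhat_weight Mm Mp i * (stencil_node Mm i ^ Suc n - (stencil_node Mm i - 1) ^ Suc n))
         / fact (Suc n)
       = (if n = 0 then 1 else 0) + (if nat (Mm + Mp) + 1 \<le> n then Lambda Mm Mp n else 0)"
proof -
  have "(\<Sum>s\<le>n. fps_nth (tau_fps * fps_exp (1 / 2)) s * fps_nth bdiff_fps (n - s))
      = fps_nth (tau_fps * fps_exp (1 / 2) * bdiff_fps) n"
    unfolding fps_mult_nth[of "tau_fps * fps_exp (1 / 2)"] by (simp add: atLeast0AtMost)
  hence "(\<Sum>s\<le>n. fps_nth (tau_fps * fps_exp (1 / 2)) s * fps_nth bdiff_fps (n - s)) = (if n = 0 then 1 else 0)"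
    by (simp add: tau_exp_half_bdiff_fps fps_one_nth)
  thus ?thesis
    unfolding hhat_weight_bdiff_eq_moments hhat_moment_eq_mu[OF assms] sum_bdiff_fps_mu_half[OF assms, symmetric]
    by (simp add: distrib_left sum.distrib mult.commute)
qed

section \<open>Taylor expansion of the stencil\<close>

lemma hhat_weight_bdiff_taylor_poly:
  fixes D :: "nat \<Rightarrow> real" and N :: nat
  assumes M: "Mm + Mp \<ge> 0"
  defines "P \<equiv> \<lambda>s. \<Sum>m\<le>Suc N. D m / fact m * s ^ m"
  shows "(\<Sum>i\<le>nat (Mm + Mp). hhat_weight Mm Mp i * (P (stencil_node Mm i * dx) - P ((stencil_node Mm i - 1) * dx)))
       = dx * (D 1 + (\<Sum>n = nat (Mm + Mp) + 1..N. Lambda Mm Mp n * dx ^ n * D (n + 1)))"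
proof -
  let ?M = "nat (Mm + Mp)"
  let ?G = "\<lambda>m. (\<Sum>i\<le>?M. hhat_weight Mm Mp i * (stencil_node Mm i ^ m - (stencil_node Mm i - 1) ^ m)) / fact m"
  have "(\<Sum>i\<le>?M. hhat_weight Mm Mp i * (P (stencil_node Mm i * dx) - P ((stencil_node Mm i - 1) * dx)))
      = (\<Sum>m\<le>Suc N. D m * dx ^ m * ?G m)"
  proof -
    have "(\<Sum>i\<le>?M. hhat_weight Mm Mp i * (P (stencil_node Mm i * dx) - P ((stencil_node Mm i - 1) * dx)))
        = (\<Sum>i\<le>?M. \<Sum>m\<le>Suc N. D m / fact m * dx ^ m
             * (hhat_weight Mm Mp i * (stencil_node Mm i ^ m - (stencil_node Mm i - 1) ^ m)))"
      unfolding P_def sum_subtractf[symmetric] sum_distrib_left power_mult_distrib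
      by (intro sum.cong refl) (simp only: algebra_simps)
    thus ?thesis
      by (subst (asm) sum.swap) (simp add: sum_distrib_left[symmetric] sum_divide_distrib[symmetric] mult_ac)
  qed
  also have "\<dots> = (\<Sum>k\<le>N. D (Suc k) * dx ^ Suc k * ?G (Suc k))"
    by (simp add: sum.atMost_Suc_shift del: sum.atMost_Suc)
  also have "\<dots> = (\<Sum>k\<le>N. dx * (if k = 0 then D 1 else 0))
                 + (\<Sum>k\<le>N. dx * (if ?M + 1 \<le> k then Lambda Mm Mp k * dx ^ k * D (k + 1) else 0))"
    unfolding hhat_weight_bdiff[OF M] sum.distrib[symmetric] by (rule sum.cong) (auto simp: algebra_simps)
  also have "\<dots> = dx * (D 1 + (\<Sum>n = ?M + 1..N. Lambda Mm Mp n * dx ^ n * D (n + 1)))"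
    unfolding sum_distrib_left[symmetric] distrib_left
    by (simp add: sum.If_cases Int_def atLeastAtMost_def atLeast_def conj_commute)
  finally show ?thesis .
qed

lemma hhat_bdiff_expansion:
  fixes f :: "real \<Rightarrow> real" and D :: "nat \<Rightarrow> real" and N :: nat and x :: real
  assumes M: "Mm + Mp \<ge> 0" and dx: "dx > 0"
  defines "R \<equiv> \<lambda>s. f (x + s) - (\<Sum>m\<le>Suc N. D m / fact m * s ^ m)"
  shows "(hhat f Mm Mp dx x - hhat f Mm Mp dx (x - dx)) / dx - D 1
           - (\<Sum>n = nat (Mm + Mp) + 1..N. Lambda Mm Mp n * dx ^ n * D (n + 1))
         = (\<Sum>i\<le>nat (Mm + Mp). hhat_weight Mm Mp i
              * (R (stencil_node Mm i * dx) - R ((stencil_node Mm i - 1) * dx))) / dx"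
proof -
  let ?M = "nat (Mm + Mp)" and ?P = "\<lambda>s. \<Sum>m\<le>Suc N. D m / fact m * s ^ m"
  have shifted: "hhat f Mm Mp dx (x - dx)
      = (\<Sum>i\<le>?M. hhat_weight Mm Mp i * f (x + (stencil_node Mm i - 1) * dx))"
    unfolding hhat_eq_weighted_sum[OF M dx] by (rule sum.cong) (simp_all add: algebra_simps)
  have "hhat f Mm Mp dx x - hhat f Mm Mp dx (x - dx)
      = (\<Sum>i\<le>?M. hhat_weight Mm Mp i * (R (stencil_node Mm i * dx) - R ((stencil_node Mm i - 1) * dx)))
        + (\<Sum>i\<le>?M. hhat_weight Mm Mp i * (?P (stencil_node Mm i * dx) - ?P ((stencil_node Mm i - 1) * dx)))"
    unfolding hhat_eq_weighted_sum[OF M dx, of f x] shifted R_def sum.distrib[symmetric] sum_subtractf[symmetric]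
    by (intro sum.cong) (simp_all add: sum_subtractf algebra_simps)
  thus ?thesis
    unfolding hhat_weight_bdiff_taylor_poly[OF M] using dx by (simp add: field_simps)
qed

section \<open>Asymptotics\<close>

lemma Ck_on_DERIV:
  assumes "Ck_on k f U" "m < k" "y \<in> U"
  shows "DERIV ((deriv ^^ m) f) y :> (deriv ^^ Suc m) f y"
  using assms by (simp add: Ck_on_def DERIV_deriv_iff_field_differentiable)

lemma taylor_remainder_bigo:
  fixes f :: "real \<Rightarrow> real"
  assumes f: "Ck_on k f U" and U: "open U" "x \<in> U" and k: "0 < k"
  shows "(\<lambda>s. f (x + s) - (\<Sum>m<k. (deriv ^^ m) f x / fact m * s ^ m)) \<in> O[nhds 0](\<lambda>s. s ^ k)"
proof -
  obtain r where r: "r > 0" "cball x r \<subseteq> U" using U open_contains_cball by blast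
  have "compact ((deriv ^^ k) f ` cball x r)"
    using f r(2) unfolding Ck_on_def by (intro compact_continuous_image) (auto intro: continuous_on_subset)
  then obtain B where B: "\<forall>t\<in>cball x r. \<bar>(deriv ^^ k) f t\<bar> \<le> B"
    using compact_imp_bounded bounded_iff by (metis image_eqI real_norm_def)
  have "\<bar>f (x + s) - (\<Sum>m<k. (deriv ^^ m) f x / fact m * s ^ m)\<bar> \<le> B / fact k * \<bar>s ^ k\<bar>"
    if s: "\<bar>s\<bar> < r" for s
  proof (cases "s = 0")
    case True
    from k obtain k' where "k = Suc k'" using gr0_conv_Suc by blast
    thus ?thesis using True by (simp add: sum.lessThan_Suc_shift del: sum.lessThan_Suc)
  next
    case False
    have "DERIV ((deriv ^^ m) f) t :> (deriv ^^ Suc m) f t" if "m < k" "x - r \<le> t" "t \<le> x + r" for m t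
      using that r(2) by (intro Ck_on_DERIV[OF f]) (auto simp: dist_real_def)
    then obtain t where t: "if x + s < x then x + s < t \<and> t < x else x < t \<and> t < x + s"
      "f (x + s) = (\<Sum>m<k. (deriv ^^ m) f x / fact m * (x + s - x) ^ m) + (deriv ^^ k) f t / fact k * (x + s - x) ^ k"
      using Taylor[of k "\<lambda>m. (deriv ^^ m) f" f "x - r" "x + r" x "x + s"] k s False r(1)
      by (auto simp: abs_less_iff)
    have "t \<in> cball x r" using t(1) s by (auto simp: dist_real_def split: if_splits)
    hence "\<bar>(deriv ^^ k) f t\<bar> / fact k * \<bar>s ^ k\<bar> \<le> B / fact k * \<bar>s ^ k\<bar>"
      using B by (intro mult_right_mono divide_right_mono) auto
    thus ?thesis using t(2) by (simp add: abs_mult)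
  qed
  moreover have "\<forall>\<^sub>F s in nhds 0. \<bar>s\<bar> < r"
    using eventually_nhds_metric[of "\<lambda>s. \<bar>s\<bar> < r" 0] r(1) by (auto simp: dist_real_def)
  ultimately show ?thesis
    by (intro bigoI[where c="B / fact k"]) (auto elim!: eventually_mono)
qed

lemma bigo_nhds_0_compose_scale:
  fixes g :: "real \<Rightarrow> real"
  assumes "g \<in> O[nhds 0](\<lambda>s. s ^ k)"
  shows "(\<lambda>dx. g (c * dx)) \<in> O[at_right 0](\<lambda>dx. dx ^ k)"
proof -
  have "filterlim (\<lambda>dx. c * dx) (nhds 0) (at_right (0::real))"
    by (intro tendsto_mult_right_zero tendsto_ident_at)
  hence "(\<lambda>dx. g (c * dx)) \<in> O[at_right 0](\<lambda>dx. (c * dx) ^ k)"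
    by (rule landau_o.big.compose[OF assms])
  also have "(\<lambda>dx. (c * dx) ^ k) \<in> O[at_right 0](\<lambda>dx. dx ^ k)"
    by (cases "c = 0") (simp_all add: power_mult_distrib power_0_left)
  finally show ?thesis .
qed

lemma bigo_divide_ident:
  fixes g :: "real \<Rightarrow> real"
  assumes "g \<in> O[F](\<lambda>x. x ^ Suc k)"
  shows "(\<lambda>x. g x / x) \<in> O[F](\<lambda>x. x ^ k)"
proof -
  obtain c where "c > 0" "\<forall>\<^sub>F x in F. \<bar>g x\<bar> \<le> c * \<bar>x ^ Suc k\<bar>"
    using assms by (auto elim: landau_o.bigE)
  hence "\<forall>\<^sub>F x in F. \<bar>g x / x\<bar> \<le> c * \<bar>x ^ k\<bar>"
    by (auto elim!: eventually_mono simp: abs_mult divide_le_eq mult_ac)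
  thus ?thesis by (intro bigoI) simp
qed

lemma power_bigo_power_at_right_0:
  "m \<le> n \<Longrightarrow> (\<lambda>x::real. x ^ n) \<in> O[at_right 0](\<lambda>x. x ^ m)"
  by (intro bigoI[where c=1])
    (auto simp: eventually_at_right_field intro!: exI[of _ 1] power_decreasing)

lemma bigo_const_mult_left: "f \<in> O[F](g) \<Longrightarrow> (\<lambda>x. c * f x) \<in> O[F](g)"
  by (cases "c = 0") simp_all

lemma bigo_sum_powers_at_right_0:
  "(\<lambda>x::real. \<Sum>n = m..N. c n * x ^ n) \<in> O[at_right 0](\<lambda>x. x ^ m)"
  by (intro big_sum_in_bigo bigo_const_mult_left power_bigo_power_at_right_0) simp

lemma hhat_bdiff_remainder_bigo:
  fixes f :: "real \<Rightarrow> real"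
  assumes M: "Mm + Mp \<ge> 0" and U: "open U" "x \<in> U" and f: "Ck_on (N + 2) f U"
  shows "(\<lambda>dx. (hhat f Mm Mp dx x - hhat f Mm Mp dx (x - dx)) / dx - deriv f x
            - (\<Sum>n = nat (Mm + Mp) + 1..N. Lambda Mm Mp n * dx ^ n * (deriv ^^ (n + 1)) f x))
          \<in> O[at_right 0](\<lambda>dx. dx ^ (N + 1))"
proof -
  define R where "R = (\<lambda>s. f (x + s) - (\<Sum>m\<le>Suc N. (deriv ^^ m) f x / fact m * s ^ m))"
  have R: "R \<in> O[nhds 0](\<lambda>s. s ^ Suc (N + 1))"
    using taylor_remainder_bigo[OF f U] unfolding R_def lessThan_Suc_atMost[symmetric]
    by (simp add: numeral_2_eq_2)
  let ?W = "\<lambda>dx. \<Sum>i\<le>nat (Mm + Mp).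
    hhat_weight Mm Mp i * (R (stencil_node Mm i * dx) - R ((stencil_node Mm i - 1) * dx))"
  have "?W \<in> O[at_right 0](\<lambda>dx. dx ^ Suc (N + 1))"
    by (intro big_sum_in_bigo bigo_const_mult_left sum_in_bigo(2) bigo_nhds_0_compose_scale R)
  hence W: "(\<lambda>dx. ?W dx / dx) \<in> O[at_right 0](\<lambda>dx. dx ^ (N + 1))"
    by (rule bigo_divide_ident)
  have "\<forall>\<^sub>F dx in at_right 0. ?W dx / dx = (hhat f Mm Mp dx x - hhat f Mm Mp dx (x - dx)) / dx
      - deriv f x - (\<Sum>n = nat (Mm + Mp) + 1..N. Lambda Mm Mp n * dx ^ n * (deriv ^^ (n + 1)) f x)"
    using eventually_at_right_less[of "0::real"]
  proof (rule eventually_mono)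
    fix dx :: real
    assume "0 < dx"
    from hhat_bdiff_expansion[OF M this, where D = "\<lambda>m. (deriv ^^ m) f x"]
    show "?W dx / dx = (hhat f Mm Mp dx x - hhat f Mm Mp dx (x - dx)) / dx
      - deriv f x - (\<Sum>n = nat (Mm + Mp) + 1..N. Lambda Mm Mp n * dx ^ n * (deriv ^^ (n + 1)) f x)"
      by (simp add: R_def)
  qed
  from landau_o.big.in_cong[OF this] W show ?thesis
    by blast
qed

theorem corollary3:
  fixes f :: "real \<Rightarrow> real" and h :: "real \<Rightarrow> real \<Rightarrow> real"
    and Mm Mp :: int and N :: nat and x \<delta> :: real and U :: "real set"
  assumes M_nonneg: "Mm + Mp \<ge> 0"
    and N_ge: "N \<ge> nat (Mm + Mp) + 1"
    and U: "open U" "x \<in> U"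
    and f_smooth: "Ck_on (N + 2) f U"
    and \<delta>: "\<delta> > 0"
    and recon: "\<forall>dx\<in>{0<..<\<delta>}. Ck_on (N + 2) (h dx) U \<and>
        (\<forall>y. {y - dx / 2 .. y + dx / 2} \<subseteq> U \<longrightarrow>
             f y = 1 / dx * integral {y - dx / 2 .. y + dx / 2} (h dx))"
  shows "(\<lambda>dx. (hhat f Mm Mp dx x - hhat f Mm Mp dx (x - dx)) / dx - deriv f x
            - (\<Sum>n=nat (Mm + Mp) + 1..N. Lambda Mm Mp n * dx ^ n * (deriv ^^ (n + 1)) f x))
          \<in> O[at_right 0](\<lambda>dx. dx ^ (N + 1))
     \<and> (\<lambda>dx. (hhat f Mm Mp dx x - hhat f Mm Mp dx (x - dx)) / dx - deriv f x)
          \<in> O[at_right 0](\<lambda>dx. dx ^ (nat (Mm + Mp) + 1))"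
proof
  let ?M = "nat (Mm + Mp)"
  let ?E = "\<lambda>dx. (hhat f Mm Mp dx x - hhat f Mm Mp dx (x - dx)) / dx - deriv f x"
  let ?S = "\<lambda>dx. \<Sum>n = ?M + 1..N. Lambda Mm Mp n * dx ^ n * (deriv ^^ (n + 1)) f x"
  show remainder: "(\<lambda>dx. ?E dx - ?S dx) \<in> O[at_right 0](\<lambda>dx. dx ^ (N + 1))"
    by (rule hhat_bdiff_remainder_bigo[OF M_nonneg U f_smooth])
  have "(\<lambda>dx. ?E dx - ?S dx) \<in> O[at_right 0](\<lambda>dx. dx ^ (?M + 1))"
    using N_ge by (intro landau_o.big_trans[OF remainder power_bigo_power_at_right_0]) simp
  moreover have "?S \<in> O[at_right 0](\<lambda>dx. dx ^ (?M + 1))"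
    using bigo_sum_powers_at_right_0[of "\<lambda>n. Lambda Mm Mp n * (deriv ^^ (n + 1)) f x" "?M + 1" N]
    by (simp only: mult_ac)
  ultimately have "(\<lambda>dx. (?E dx - ?S dx) + ?S dx) \<in> O[at_right 0](\<lambda>dx. dx ^ (?M + 1))"
    by (intro sum_in_bigo(1))
  thus "?E \<in> O[at_right 0](\<lambda>dx. dx ^ (?M + 1))"
    by (simp only: diff_add_cancel)
qed

end
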